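(* Let $(A,\ast,\alpha)$ be a nearly Hom-associative algebra over a field $\mathbb{K}$ of characteristic $0$. Then $(A,[\cdot,\cdot],\alpha)$ is a Hom-Lie algebra, where $[x,y]=x\ast y-y\ast x$ for all $x,y\in A$.
   Context: A nearly Hom-associative algebra is a triple $(A,\ast,\alpha)$ with $A$ a linear space, $\ast:A\times A\to A$ bilinear and $\alpha:A\to A$ linear, such that $\alpha(x)\ast(y\ast z)=(z\ast x)\ast\alpha(y)$ for all $x,y,z\in A$. A Hom-Lie algebra is a triple $(A,[\cdot,\cdot],\alpha)$ with $[\cdot,\cdot]$ bilinear and $\alpha$ linear such that $[x,y]=-[y,x]$ and $[\alpha(x),[y,z]]+[\alpha(y),[z,x]]+[\alpha(z),[x,y]]=0$ for all $x,y,z$. *)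

theory Defs
  imports Complex_Main
begin

definition bilinear_map :: "('k::field \<Rightarrow> 'a::ab_group_add \<Rightarrow> 'a) \<Rightarrow> ('a \<Rightarrow> 'a \<Rightarrow> 'a) \<Rightarrow> bool" where
  "bilinear_map s m \<longleftrightarrow> (\<forall>x. Vector_Spaces.linear s s (m x)) \<and> (\<forall>y. Vector_Spaces.linear s s (\<lambda>x. m x y))"

definition nearly_hom_assoc :: "('k::field \<Rightarrow> 'a::ab_group_add \<Rightarrow> 'a) \<Rightarrow> ('a \<Rightarrow> 'a \<Rightarrow> 'a) \<Rightarrow> ('a \<Rightarrow> 'a) \<Rightarrow> bool" where
  "nearly_hom_assoc s m \<alpha> \<longleftrightarrow> vector_space s \<and> bilinear_map s m \<and> Vector_Spaces.linear s s \<alpha> \<and>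
     (\<forall>x y z. m (\<alpha> x) (m y z) = m (m z x) (\<alpha> y))"

definition hom_lie :: "('k::field \<Rightarrow> 'a::ab_group_add \<Rightarrow> 'a) \<Rightarrow> ('a \<Rightarrow> 'a \<Rightarrow> 'a) \<Rightarrow> ('a \<Rightarrow> 'a) \<Rightarrow> bool" where
  "hom_lie s b \<alpha> \<longleftrightarrow> vector_space s \<and> bilinear_map s b \<and> Vector_Spaces.linear s s \<alpha> \<and>
     (\<forall>x y. b x y = - b y x) \<and>
     (\<forall>x y z. b (\<alpha> x) (b y z) + b (\<alpha> y) (b z x) + b (\<alpha> z) (b x y) = 0)"

end

theory Submission
  imports Defs
begin

text \<open>Expanding the Hom-Jacobiator of the commutator bracket by biadditivity gives twelve
  products. Each product with \<open>\<alpha>\<close> on the left is turned by the nearly Hom-associative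
  identity \<open>\<alpha>(a)(bc) = (ca)\<alpha>(b)\<close> into the negative of one with \<open>\<alpha>\<close> on the right, so the
  twelve terms cancel in six pairs. Neither scalars nor the characteristic of the field enter.\<close>

definition commutator :: "('a::ab_group_add \<Rightarrow> 'a \<Rightarrow> 'a) \<Rightarrow> 'a \<Rightarrow> 'a \<Rightarrow> 'a" where
  "commutator m = (\<lambda>x y. m x y - m y x)"

lemma commutator_antisym: "commutator m x y = - commutator m y x"
  by (simp add: commutator_def)

lemma bilinear_map_diff_left:
  assumes "bilinear_map s m"
  shows "m (a - b) y = m a y - m b y"
  using assms module_hom.diff unfolding bilinear_map_def linear_iff_module_hom by fastforce

lemma bilinear_map_diff_right:
  assumes "bilinear_map s m"
  shows "m x (a - b) = m x a - m x b"
  using assms module_hom.diff unfolding bilinear_map_def linear_iff_module_hom by fastforce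

lemma bilinear_map_commutator:
  assumes "vector_space s" and "bilinear_map s m"
  shows "bilinear_map s (commutator m)"
proof -
  interpret vector_space_pair s s
    using assms(1) by (simp add: vector_space_pair_def)
  show ?thesis
    using assms(2) by (auto simp: bilinear_map_def commutator_def intro!: linear_compose_sub)
qed

lemma commutator_hom_jacobi:
  fixes m :: "'a::ab_group_add \<Rightarrow> 'a \<Rightarrow> 'a"
  assumes diff_left: "\<And>a b y. m (a - b) y = m a y - m b y"
    and diff_right: "\<And>x a b. m x (a - b) = m x a - m x b"
    and nearly_assoc: "\<And>x y z. m (\<alpha> x) (m y z) = m (m z x) (\<alpha> y)"
  shows "commutator m (\<alpha> x) (commutator m y z) + commutator m (\<alpha> y) (commutator m z x)
           + commutator m (\<alpha> z) (commutator m x y) = 0"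
  by (simp add: commutator_def diff_left diff_right nearly_assoc algebra_simps)

theorem mainTheorem10:
  fixes s :: "'k::field_char_0 \<Rightarrow> 'a::ab_group_add \<Rightarrow> 'a"
    and m :: "'a \<Rightarrow> 'a \<Rightarrow> 'a" and \<alpha> :: "'a \<Rightarrow> 'a"
  assumes "nearly_hom_assoc s m \<alpha>"
  shows "hom_lie s (\<lambda>x y. m x y - m y x) \<alpha>"
proof -
  have vs: "vector_space s" and bilinear: "bilinear_map s m" and linear_\<alpha>: "Vector_Spaces.linear s s \<alpha>"
    and nearly_assoc: "\<And>x y z. m (\<alpha> x) (m y z) = m (m z x) (\<alpha> y)"
    using assms unfolding nearly_hom_assoc_def by auto
  have "hom_lie s (commutator m) \<alpha>"
    unfolding hom_lie_def
    using vs bilinear_map_commutator[OF vs bilinear] linear_\<alpha> commutator_antisym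
      commutator_hom_jacobi[OF bilinear_map_diff_left[OF bilinear]
        bilinear_map_diff_right[OF bilinear] nearly_assoc]
    by blast
  then show ?thesis
    by (simp add: commutator_def)
qed

end
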